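(* Let $f$ be a $T$-norm. If $f$ is an Archimedean copula, then $f$ satisfies both property $A$ and property $B$.
   Context: A $T$-norm is a function $f:[0,1]^2\to[0,1]$ that is commutative, associative, monotonic ($x\leq y$ implies $f(x,z)\leq f(y,z)$) and satisfies $f(x,1)=x$. A $T$-norm $f$ is Archimedean if for all $0<x,y<1$ there is $n$ with $x^{\otimes n}\leq y$, where $x^{\otimes n}=f(x,f(x,\dots))$ is the $n$-fold product. A copula is a function $f:[0,1]^2\to[0,1]$ that satisfies neutrality of $1$, is monotonic, and satisfies property $B$. Property $A$: for all $0\leq x\leq y\leq z\leq w\leq 1$, $w+x\leq y+z$ implies $f(x,w)\leq f(y,z)$. Property $B$: for all $0\leq x\leq y\leq1$ and $0\leq z\leq w\leq1$, $f(x,w)-f(x,z)\leq f(y,w)-f(y,z)$. *)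

theory Defs
  imports Main "HOL.Real"
begin

text \<open>Binary operations on the unit square are modelled as functions
  real => real => real; all conditions are relativised to [0,1].\<close>

definition unit_op :: "(real \<Rightarrow> real \<Rightarrow> real) \<Rightarrow> bool" where
  "unit_op f \<longleftrightarrow> (\<forall>x\<in>{0..1}. \<forall>y\<in>{0..1}. f x y \<in> {0..1})"

definition is_tnorm :: "(real \<Rightarrow> real \<Rightarrow> real) \<Rightarrow> bool" where
  "is_tnorm f \<longleftrightarrow> unit_op f
     \<and> (\<forall>x\<in>{0..1}. \<forall>y\<in>{0..1}. f x y = f y x)
     \<and> (\<forall>x\<in>{0..1}. \<forall>y\<in>{0..1}. \<forall>z\<in>{0..1}. f x (f y z) = f (f x y) z)
     \<and> (\<forall>x\<in>{0..1}. \<forall>y\<in>{0..1}. \<forall>z\<in>{0..1}. x \<le> y \<longrightarrow> f x z \<le> f y z)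
     \<and> (\<forall>x\<in>{0..1}. f x 1 = x)"

fun tpow :: "(real \<Rightarrow> real \<Rightarrow> real) \<Rightarrow> real \<Rightarrow> nat \<Rightarrow> real" where
  "tpow f x 0 = 1"
| "tpow f x (Suc n) = f x (tpow f x n)"

definition archimedean :: "(real \<Rightarrow> real \<Rightarrow> real) \<Rightarrow> bool" where
  "archimedean f \<longleftrightarrow> (\<forall>x y. 0 < x \<and> x < 1 \<and> 0 < y \<and> y < 1 \<longrightarrow> (\<exists>n. tpow f x n \<le> y))"

definition property_B :: "(real \<Rightarrow> real \<Rightarrow> real) \<Rightarrow> bool" where
  "property_B f \<longleftrightarrow> (\<forall>x y z w. 0 \<le> x \<and> x \<le> y \<and> y \<le> 1 \<and> 0 \<le> z \<and> z \<le> w \<and> w \<le> 1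
      \<longrightarrow> f x w - f x z \<le> f y w - f y z)"

definition property_A :: "(real \<Rightarrow> real \<Rightarrow> real) \<Rightarrow> bool" where
  "property_A f \<longleftrightarrow> (\<forall>x y z w. 0 \<le> x \<and> x \<le> y \<and> y \<le> z \<and> z \<le> w \<and> w \<le> 1
      \<and> w + x \<le> y + z \<longrightarrow> f x w \<le> f y z)"

definition is_copula :: "(real \<Rightarrow> real \<Rightarrow> real) \<Rightarrow> bool" where
  "is_copula f \<longleftrightarrow> unit_op f
     \<and> (\<forall>x\<in>{0..1}. f x 1 = x \<and> f 1 x = x)
     \<and> (\<forall>x\<in>{0..1}. \<forall>y\<in>{0..1}. \<forall>z\<in>{0..1}. x \<le> y \<longrightarrow> f x z \<le> f y z \<and> f z x \<le> f z y)
     \<and> property_B f"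

end

theory Submission
  imports Defs "HOL-Analysis.Analysis"
begin

text \<open>Property B is part of being a copula. For property A, let
  \<open>x \<le> y \<le> z \<le> w\<close> with \<open>w + x \<le> y + z\<close>. Property B makes a copula
  1-Lipschitz in its second argument, so by the intermediate value theorem
  \<open>f y v = x\<close> for some \<open>v\<close>. Associativity gives \<open>f x w = f y (f v w)\<close>,
  and property B on the rectangle \<open>[y,w] \<times> [v,1]\<close> gives
  \<open>f v w \<le> w - y + x \<le> z\<close>; monotonicity concludes.\<close>

lemma
  assumes "is_tnorm f" and "x \<in> {0..1}" "y \<in> {0..1}"
  shows tnorm_range: "f x y \<in> {0..1}"
    and tnorm_commute: "f x y = f y x"
  using assms unfolding is_tnorm_def unit_op_def by blast+

lemma tnorm_one_right:
  assumes "is_tnorm f" and "x \<in> {0..1}"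
  shows "f x 1 = x"
  using assms unfolding is_tnorm_def by blast

lemma tnorm_assoc:
  assumes "is_tnorm f" and "x \<in> {0..1}" "y \<in> {0..1}" "z \<in> {0..1}"
  shows "f x (f y z) = f (f x y) z"
  using assms unfolding is_tnorm_def by blast

lemma tnorm_mono_left:
  assumes "is_tnorm f" and "x \<in> {0..1}" "y \<in> {0..1}" "z \<in> {0..1}" and "x \<le> y"
  shows "f x z \<le> f y z"
  using assms unfolding is_tnorm_def by blast

lemma tnorm_zero_right:
  assumes "is_tnorm f" and "t \<in> {0..1}"
  shows "f t 0 = 0"
proof -
  have "f t 0 \<le> f 1 0" using assms tnorm_mono_left[of f t 1 0] by simp
  also have "\<dots> = 0" using assms(1) tnorm_commute[of f 1 0] tnorm_one_right[of f 0] by simp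
  finally show ?thesis using assms tnorm_range[of f t 0] by simp
qed

lemma
  assumes "is_copula f" and "x \<in> {0..1}"
  shows copula_one_left: "f 1 x = x"
    and copula_one_right: "f x 1 = x"
  using assms unfolding is_copula_def by blast+

lemma copula_mono_right:
  assumes "is_copula f" and "y \<in> {0..1}" and "0 \<le> a" "a \<le> b" "b \<le> 1"
  shows "f y a \<le> f y b"
  using assms unfolding is_copula_def by simp

lemma copula_rectangle:
  assumes "is_copula f" and "0 \<le> x" "x \<le> y" "y \<le> 1" and "0 \<le> z" "z \<le> w" "w \<le> 1"
  shows "f x w - f x z \<le> f y w - f y z"
  using assms unfolding is_copula_def property_B_def by blast

lemma copula_increment_le:
  assumes "is_copula f" and "y \<in> {0..1}" and "0 \<le> a" "a \<le> b" "b \<le> 1"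
  shows "f y b - f y a \<le> b - a"
  using copula_rectangle[of f y 1 a b] assms copula_one_left[of f a] copula_one_left[of f b]
  by simp

lemma copula_continuous_on_right:
  assumes "is_copula f" and "y \<in> {0..1}"
  shows "continuous_on {0..1} (f y)"
proof -
  have "dist (f y b) (f y a) \<le> dist b a" if "a \<in> {0..1}" "b \<in> {0..1}" for a b
  proof (cases "a \<le> b")
    case True
    then show ?thesis using that assms copula_increment_le[of f y a b]
        copula_mono_right[of f y a b] by (simp add: dist_real_def)
  next
    case False
    then show ?thesis using that assms copula_increment_le[of f y b a]
        copula_mono_right[of f y b a] by (simp add: dist_real_def dist_commute)
  qed
  then show ?thesis
    by (intro lipschitz_on_continuous_on[of 1] lipschitz_onI) auto
qed

lemma copula_surj_right:
  assumes "is_copula f" and "y \<in> {0..1}" and "f y 0 = 0" and "0 \<le> x" "x \<le> y"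
  obtains v where "v \<in> {0..1}" "f y v = x"
proof -
  have "x \<le> f y 1" using assms unfolding is_copula_def by simp
  then obtain v where "0 \<le> v" "v \<le> 1" "f y v = x"
    using IVT'[of "f y" 0 x 1] assms copula_continuous_on_right by auto
  then show ?thesis using that by simp
qed

lemma tnorm_copula_property_A:
  assumes tnorm: "is_tnorm f" and copula: "is_copula f"
  shows "property_A f"
  unfolding property_A_def
proof (intro allI impI)
  fix x y z w :: real
  assume h: "0 \<le> x \<and> x \<le> y \<and> y \<le> z \<and> z \<le> w \<and> w \<le> 1 \<and> w + x \<le> y + z"
  then have y: "y \<in> {0..1}" and z: "z \<in> {0..1}" and w: "w \<in> {0..1}" by auto
  obtain v where v: "v \<in> {0..1}" and yv: "f y v = x"
    using copula_surj_right[OF copula y tnorm_zero_right[OF tnorm y]] h by auto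
  have "y - x = f y 1 - f y v"
    using copula_one_right[OF copula y] yv by simp
  also have "\<dots> \<le> f w 1 - f w v"
    using copula_rectangle[OF copula, of y w v 1] h v by simp
  also have "\<dots> = w - f v w"
    using copula_one_right[OF copula w] tnorm_commute[OF tnorm w v] by simp
  finally have vw_le: "f v w \<le> z" using h by simp
  have "f x w = f y (f v w)"
    using tnorm_assoc[OF tnorm y v w] yv by simp
  also have "\<dots> \<le> f y z"
    using copula_mono_right[OF copula y] tnorm_range[OF tnorm v w] vw_le z by simp
  finally show "f x w \<le> f y z" .
qed

theorem corollary3:
  fixes f :: "real \<Rightarrow> real \<Rightarrow> real"
  assumes "is_tnorm f" and "archimedean f" and "is_copula f"
  shows "property_A f \<and> property_B f"
  using tnorm_copula_property_A[OF assms(1,3)] assms(3) unfolding is_copula_def by simp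

end
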